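(* Let $E$ be a Banach lattice and let $\mathrm{r\text{-}l\text{-}Lwc}(E)$ denote the set of r-l-Lwc operators $E\to E$. (i) $\mathrm{r\text{-}l\text{-}Lwc}(E)$ is a subalgebra of the algebra $\mathrm{L}_r(E)$ of regular operators on $E$; moreover, $\mathrm{r\text{-}l\text{-}Lwc}(E)=\mathrm{L}_r(E)$ if and only if the identity $I_E$ is limitedly L-weakly compact. (ii) If $E$ is Dedekind complete, then $\mathrm{r\text{-}l\text{-}Lwc}(E)$ is a closed order ideal of the Banach lattice $(\mathrm{L}_r(E),\|\cdot\|_r)$, where $\|T\|_r:=\|\,|T|\,\|$ is the regular norm.
   Context: All vector spaces are real and operators are linear and bounded; $\mathrm{L}_r(E)$ is the space of regular operators on $E$ (differences of positive operators). For a subset $A$ of a Banach lattice $F$, $\mathrm{sol}(A)=\bigcup_{a\in A}[-|a|,|a|]$. A subset $A\subseteq F$ is an Lwc-set if every disjoint sequence in $\mathrm{sol}(A)$ is norm-null. A bounded subset $A$ of a Banach space $X$ is limited if every weak$^\ast$-null sequence in $X'$ converges to $0$ uniformly on $A$. An operator $T:X\to F$ is limitedly L-weakly compact if $T$ maps every limited subset of $X$ onto an Lwc-subset of $F$. An operator $T:E\to E$ is an r-l-Lwc operator if $T=T_1-T_2$ where $T_1,T_2$ are positive limitedly L-weakly compact operators. *)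

theory Defs
  imports "HOL-Analysis.Analysis"
begin

class banach_lattice = banach + ordered_real_vector + lattice +
  assumes lattice_norm: "sup x (- x) \<le> sup y (- y) \<Longrightarrow> norm x \<le> norm y"

definition labs :: "'a::banach_lattice \<Rightarrow> 'a" where
  "labs x = sup x (- x)"

definition dedekind_complete :: "'a::banach_lattice itself \<Rightarrow> bool" where
  "dedekind_complete (_::'a itself) \<longleftrightarrow>
     (\<forall>A::'a set. A \<noteq> {} \<and> bdd_above A \<longrightarrow>
        (\<exists>s. (\<forall>a\<in>A. a \<le> s) \<and> (\<forall>b. (\<forall>a\<in>A. a \<le> b) \<longrightarrow> s \<le> b)))"

definition sol :: "'a::banach_lattice set \<Rightarrow> 'a set" where
  "sol A = (\<Union>a\<in>A. {y. - labs a \<le> y \<and> y \<le> labs a})"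

definition disjoint_seq :: "(nat \<Rightarrow> 'a::banach_lattice) \<Rightarrow> bool" where
  "disjoint_seq x \<longleftrightarrow> (\<forall>n m. n \<noteq> m \<longrightarrow> inf (labs (x n)) (labs (x m)) = 0)"

definition Lwc_set :: "'a::banach_lattice set \<Rightarrow> bool" where
  "Lwc_set A \<longleftrightarrow> (\<forall>x. (\<forall>n. x n \<in> sol A) \<and> disjoint_seq x \<longrightarrow> (\<lambda>n. norm (x n)) \<longlonglongrightarrow> 0)"

definition limited_set :: "'a::real_normed_vector set \<Rightarrow> bool" where
  "limited_set A \<longleftrightarrow> bounded A \<and>
     (\<forall>f :: nat \<Rightarrow> 'a \<Rightarrow> real.
        (\<forall>n. bounded_linear (f n)) \<and> (\<forall>x. (\<lambda>n. f n x) \<longlonglongrightarrow> 0) \<longrightarrow>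
        (\<forall>e>0. \<exists>N. \<forall>n\<ge>N. \<forall>x\<in>A. \<bar>f n x\<bar> < e))"

definition limitedly_Lwc :: "('a::banach_lattice \<Rightarrow> 'a) \<Rightarrow> bool" where
  "limitedly_Lwc T \<longleftrightarrow> bounded_linear T \<and> (\<forall>A. limited_set A \<longrightarrow> Lwc_set (T ` A))"

definition pos_op :: "('a::banach_lattice \<Rightarrow> 'a) \<Rightarrow> bool" where
  "pos_op T \<longleftrightarrow> bounded_linear T \<and> (\<forall>x. 0 \<le> x \<longrightarrow> 0 \<le> T x)"

definition regular_ops :: "('a::banach_lattice \<Rightarrow> 'a) set" where
  "regular_ops = {T. \<exists>T1 T2. pos_op T1 \<and> pos_op T2 \<and> T = (\<lambda>x. T1 x - T2 x)}"

definition rlLwc_ops :: "('a::banach_lattice \<Rightarrow> 'a) set" where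
  "rlLwc_ops = {T. \<exists>T1 T2. pos_op T1 \<and> limitedly_Lwc T1 \<and> pos_op T2 \<and> limitedly_Lwc T2
                   \<and> T = (\<lambda>x. T1 x - T2 x)}"

definition op_le :: "('a::banach_lattice \<Rightarrow> 'a) \<Rightarrow> ('a \<Rightarrow> 'a) \<Rightarrow> bool" where
  "op_le S T \<longleftrightarrow> pos_op (\<lambda>x. T x - S x)"

text \<open>Modulus of a regular operator: the supremum of T and -T in L_r(E)
(exists when E is Dedekind complete).\<close>
definition op_abs :: "('a::banach_lattice \<Rightarrow> 'a) \<Rightarrow> ('a \<Rightarrow> 'a)" where
  "op_abs T = (THE M. M \<in> regular_ops \<and> op_le T M \<and> op_le (\<lambda>x. - T x) M \<and>
                  (\<forall>N\<in>regular_ops. op_le T N \<and> op_le (\<lambda>x. - T x) N \<longrightarrow> op_le M N))"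

definition reg_norm :: "('a::banach_lattice \<Rightarrow> 'a) \<Rightarrow> real" where
  "reg_norm T = onorm (op_abs T)"

definition is_subalgebra :: "('a::banach_lattice \<Rightarrow> 'a) set \<Rightarrow> ('a \<Rightarrow> 'a) set \<Rightarrow> bool" where
  "is_subalgebra I L \<longleftrightarrow> I \<subseteq> L \<and> (\<lambda>x. 0) \<in> I \<and>
     (\<forall>S\<in>I. \<forall>T\<in>I. (\<lambda>x. S x + T x) \<in> I) \<and>
     (\<forall>c::real. \<forall>T\<in>I. (\<lambda>x. c *\<^sub>R T x) \<in> I) \<and>
     (\<forall>S\<in>I. \<forall>T\<in>I. S \<circ> T \<in> I)"

definition is_order_ideal :: "('a::banach_lattice \<Rightarrow> 'a) set \<Rightarrow> bool" where
  "is_order_ideal I \<longleftrightarrow> I \<subseteq> regular_ops \<and> (\<lambda>x. 0) \<in> I \<and>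
     (\<forall>S\<in>I. \<forall>T\<in>I. (\<lambda>x. S x + T x) \<in> I) \<and>
     (\<forall>c::real. \<forall>T\<in>I. (\<lambda>x. c *\<^sub>R T x) \<in> I) \<and>
     (\<forall>S\<in>regular_ops. \<forall>T\<in>I. op_le (op_abs S) (op_abs T) \<longrightarrow> S \<in> I)"

definition reg_closed :: "('a::banach_lattice \<Rightarrow> 'a) set \<Rightarrow> bool" where
  "reg_closed I \<longleftrightarrow> (\<forall>T S. (\<forall>n. T n \<in> I) \<and> S \<in> regular_ops \<and>
       (\<lambda>n. reg_norm (\<lambda>x. T n x - S x)) \<longlonglongrightarrow> 0 \<longrightarrow> S \<in> I)"

end

theory Submission
  imports Defs "HOL-Library.Lattice_Algebras" "HOL-Library.Lub_Glb"
begin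

text \<open>Call \<open>z\<close> an Lwc-element if \<open>{z}\<close> is an Lwc-set. The key fact is that an operator \<open>T\<close> is
  limitedly L-weakly compact iff every \<open>T y\<close> is an Lwc-element. For the nontrivial direction take a
  limited set \<open>A\<close> and a disjoint sequence with \<open>\<bar>x n\<bar> \<le> \<bar>T (a n)\<bar>\<close>, \<open>a n \<in> A\<close>. Hahn--Banach
  gives functionals \<open>\<psi> n\<close> dominated by \<open>w \<mapsto> sup\<^sub>r \<parallel>w\<^sup>+ \<sqinter> r \<bar>x n\<bar>\<parallel>\<close> with
  \<open>\<parallel>x n\<parallel> \<le> 2 \<psi> n (T (a n))\<close>; since the \<open>x n\<close> are disjoint and every \<open>T v\<close> is an Lwc-element,
  \<open>\<psi> n \<circ> T\<close> is weak-star null, and limitedness of \<open>A\<close> forces \<open>\<parallel>x n\<parallel> \<rightarrow> 0\<close>.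

  Lwc-elements form a closed order ideal of \<open>E\<close>, so part (i) reduces to bookkeeping with differences
  of positive operators. For Dedekind complete \<open>E\<close> the modulus \<open>\<bar>T\<bar> = 2 T\<^sup>+ - T\<close> exists by the
  Riesz--Kantorovich formula, and \<open>T\<close> is r-l-Lwc iff \<open>\<bar>T\<bar>\<close> maps the positive cone to
  Lwc-elements; solidity and closedness in the regular norm follow from the ideal properties.\<close>

context banach_lattice begin
subclass lattice_ab_group_add ..
end

lemma pprt_diff_pprt_minus: "pprt x - pprt (- x) = (x::'a::lattice_ab_group_add)"
  using prts[of x] by (simp add: pprt_neg)

lemma pprt_add_le: "pprt (x + y) \<le> pprt x + pprt (y::'a::lattice_ab_group_add)"
  by (simp add: pprt_def add_mono)

lemma inf_add_le_add_inf:
  fixes a b c :: "'a::lattice_ab_group_add"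
  assumes "0 \<le> a" "0 \<le> b" "0 \<le> c"
  shows "inf (a + b) c \<le> inf a c + inf b c"
proof -
  have "inf a c + inf b c = inf (inf (a + b) (c + b)) (inf (a + c) (c + c))"
    by (simp add: add_inf_distrib_left add_inf_distrib_right)
  moreover have "inf (a + b) c \<le> c + b" "inf (a + b) c \<le> a + c" "inf (a + b) c \<le> c + c"
    using assms by (auto intro: le_infI2 add_increasing add_increasing2)
  ultimately show ?thesis by (simp add: le_infI1 le_infI2)
qed

lemma diff_inf_le:
  fixes u v w :: "'a::lattice_ab_group_add"
  assumes "u \<le> v + w" "0 \<le> w"
  shows "u - inf u v \<le> w"
proof -
  have "u - inf u v = sup 0 (u - v)"
    by (simp add: add_sup_distrib_left)
  then show ?thesis using assms by (simp add: add.commute diff_le_eq)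
qed

lemma diff_inf_nonneg: "0 \<le> u - inf u (v::'a::lattice_ab_group_add)"
  by (simp only: diff_ge_0_iff_ge inf.cobounded1)

lemma inf_eq_0_mono:
  fixes a b :: "'a::{lattice, zero}"
  assumes "inf a b = 0" "0 \<le> a'" "a' \<le> a" "0 \<le> b'" "b' \<le> b"
  shows "inf a' b' = 0"
  using assms by (metis antisym inf_mono le_inf_iff)

lemma scaleR_sup_distrib:
  fixes a b :: "'a::{ordered_real_vector, lattice}"
  assumes "0 \<le> t"
  shows "t *\<^sub>R sup a b = sup (t *\<^sub>R a) (t *\<^sub>R b)"
proof (cases "t = 0")
  case False
  with assms have t: "0 < t" by simp
  have le_iff: "t *\<^sub>R x \<le> y \<longleftrightarrow> x \<le> inverse t *\<^sub>R y" for x y :: 'a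
    using scaleR_le_cancel_left_pos[OF t, of x "inverse t *\<^sub>R y"] t by simp
  show ?thesis
  proof (rule antisym)
    have "sup a b \<le> inverse t *\<^sub>R sup (t *\<^sub>R a) (t *\<^sub>R b)"
      by (intro le_supI le_iff[THEN iffD1] sup.cobounded1 sup.cobounded2)
    then show "t *\<^sub>R sup a b \<le> sup (t *\<^sub>R a) (t *\<^sub>R b)" by (rule le_iff[THEN iffD2])
    show "sup (t *\<^sub>R a) (t *\<^sub>R b) \<le> t *\<^sub>R sup a b"
      using assms by (intro le_supI scaleR_left_mono) auto
  qed
qed simp

lemma scaleR_inf_distrib:
  fixes a b :: "'a::{ordered_real_vector, lattice}"
  assumes "0 \<le> t"
  shows "t *\<^sub>R inf a b = inf (t *\<^sub>R a) (t *\<^sub>R b)"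
proof (cases "t = 0")
  case False
  with assms have t: "0 < t" by simp
  have le_iff: "y \<le> t *\<^sub>R x \<longleftrightarrow> inverse t *\<^sub>R y \<le> x" for x y :: 'a
    using scaleR_le_cancel_left_pos[OF t, of "inverse t *\<^sub>R y" x] t by simp
  show ?thesis
  proof (rule antisym)
    have "inverse t *\<^sub>R inf (t *\<^sub>R a) (t *\<^sub>R b) \<le> inf a b"
      by (intro le_infI le_iff[THEN iffD1] inf.cobounded1 inf.cobounded2)
    then show "inf (t *\<^sub>R a) (t *\<^sub>R b) \<le> t *\<^sub>R inf a b" by (rule le_iff[THEN iffD2])
    show "t *\<^sub>R inf a b \<le> inf (t *\<^sub>R a) (t *\<^sub>R b)"
      using assms by (intro le_infI scaleR_left_mono) auto
  qed
qed simp

lemma pprt_scaleR: "0 \<le> t \<Longrightarrow> pprt (t *\<^sub>R x) = t *\<^sub>R pprt (x::'a::banach_lattice)"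
  by (simp add: pprt_def scaleR_sup_distrib)

lemma inf_scaleR_eq_0:
  fixes a b :: "'a::banach_lattice"
  assumes "inf a b = 0" "0 \<le> a" "0 \<le> b" "0 \<le> r" "0 \<le> s"
  shows "inf (r *\<^sub>R a) (s *\<^sub>R b) = 0"
proof (rule inf_eq_0_mono)
  show "inf (max r s *\<^sub>R a) (max r s *\<^sub>R b) = 0"
    using assms by (simp add: scaleR_inf_distrib[symmetric])
  show "r *\<^sub>R a \<le> max r s *\<^sub>R a" "s *\<^sub>R b \<le> max r s *\<^sub>R b"
    using assms by (auto intro: scaleR_right_mono)
qed (use assms in \<open>simp_all add: scaleR_nonneg_nonneg\<close>)

lemma labs_ge: "(x::'a::banach_lattice) \<le> labs x" "- x \<le> labs x"
  by (simp_all add: labs_def)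

lemma labs_leI: "(x::'a::banach_lattice) \<le> u \<Longrightarrow> - x \<le> u \<Longrightarrow> labs x \<le> u"
  by (simp add: labs_def)

lemma labs_nonneg: "0 \<le> labs (x::'a::banach_lattice)"
  using labs_ge[of x] by (metis add_mono add.right_inverse zero_le_double_add_iff_zero_le_single_add)

lemma labs_of_nonneg: "0 \<le> (x::'a::banach_lattice) \<Longrightarrow> labs x = x"
  unfolding labs_def by (rule sup_absorb1) (meson order_trans neg_le_0_iff_le)

lemma labs_minus: "labs (- (x::'a::banach_lattice)) = labs x"
  by (simp add: labs_def sup_commute)

lemma labs_le_iff: "labs (y::'a::banach_lattice) \<le> labs z \<longleftrightarrow> - labs z \<le> y \<and> y \<le> labs z"
  using labs_ge[of y] by (auto intro: labs_leI order_trans simp: minus_le_iff)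

lemma labs_triangle: "labs ((x::'a::banach_lattice) + y) \<le> labs x + labs y"
proof (rule labs_leI)
  show "x + y \<le> labs x + labs y" by (intro add_mono labs_ge)
  have "- x + - y \<le> labs x + labs y" by (intro add_mono labs_ge)
  then show "- (x + y) \<le> labs x + labs y" by simp
qed

lemma labs_eq_pprt: "labs (x::'a::banach_lattice) = pprt x + pprt (- x)"
proof -
  have "pprt x + pprt (- x) = sup (x + sup (- x) 0) (0 + sup (- x) 0)"
    by (simp add: pprt_def add_sup_distrib_right)
  also have "\<dots> = sup (sup 0 x) (sup (- x) 0)"
    by (simp add: add_sup_distrib_left)
  also have "\<dots> = sup 0 (labs x)" by (simp add: labs_def sup_aci)
  finally show ?thesis using labs_nonneg[of x] by (simp add: sup_absorb2)
qed

lemma pprt_le_labs: "pprt (x::'a::banach_lattice) \<le> labs x"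
  using labs_nonneg[of x] by (simp add: pprt_def labs_def le_supI1)

lemma labs_scaleR: "labs (t *\<^sub>R (x::'a::banach_lattice)) = \<bar>t\<bar> *\<^sub>R labs x"
proof (cases "0 \<le> t")
  case False
  have "(- t) *\<^sub>R labs x = sup ((- t) *\<^sub>R x) ((- t) *\<^sub>R (- x))"
    unfolding labs_def using False by (intro scaleR_sup_distrib) simp
  also have "\<dots> = labs (t *\<^sub>R x)" by (simp add: labs_def sup_commute)
  finally show ?thesis using False by simp
qed (simp add: labs_def scaleR_sup_distrib)

lemma norm_labs: "norm (labs (x::'a::banach_lattice)) = norm x"
  by (metis antisym labs_def labs_of_nonneg labs_nonneg lattice_norm order_refl)

lemma norm_le_if_labs_le: "labs (x::'a::banach_lattice) \<le> labs y \<Longrightarrow> norm x \<le> norm y"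
  by (simp add: labs_def lattice_norm)

lemma norm_mono_nonneg: "0 \<le> (x::'a::banach_lattice) \<Longrightarrow> x \<le> y \<Longrightarrow> norm x \<le> norm y"
  by (metis labs_of_nonneg norm_le_if_labs_le order.trans)

section \<open>Sublinear functionals and the Hahn--Banach theorem\<close>

definition sublinear :: "('a::real_vector \<Rightarrow> real) \<Rightarrow> bool" where
  "sublinear p \<longleftrightarrow> (\<forall>x y. p (x + y) \<le> p x + p y) \<and> (\<forall>t x. 0 < t \<longrightarrow> p (t *\<^sub>R x) \<le> t * p x)"

lemma sublinear_add: "sublinear p \<Longrightarrow> p (x + y) \<le> p x + p y"
  by (simp add: sublinear_def)

lemma sublinear_scaleR_le: "sublinear p \<Longrightarrow> 0 < t \<Longrightarrow> p (t *\<^sub>R x) \<le> t * p x"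
  by (simp add: sublinear_def)

lemma sublinear_0:
  assumes "sublinear p" shows "p 0 = 0"
  using sublinear_add[OF assms, of 0 0] sublinear_scaleR_le[OF assms, of "1/2" 0] by simp

lemma sublinear_scaleR:
  assumes p: "sublinear p" and "0 \<le> t" shows "p (t *\<^sub>R x) = t * p x"
proof (cases "t = 0")
  case False
  with assms have t: "0 < t" by simp
  have "p x = p (inverse t *\<^sub>R (t *\<^sub>R x))" using t by simp
  also have "\<dots> \<le> inverse t * p (t *\<^sub>R x)" using t by (intro sublinear_scaleR_le[OF p]) simp
  finally have "t * p x \<le> p (t *\<^sub>R x)" using t by (simp add: field_simps)
  with sublinear_scaleR_le[OF p t, of x] show ?thesis by simp
qed (simp add: sublinear_0[OF p])

lemma sublinear_minus_le: "sublinear p \<Longrightarrow> - p (- x) \<le> p x"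
  using sublinear_add[of p x "- x"] sublinear_0[of p] by simp

text \<open>A minimal sublinear functional \<open>q\<close> coincides with \<open>reduce_along q y\<close>, which is at most
  \<open>- q y\<close> at \<open>- y\<close>; hence \<open>q (- y) = - q y\<close>, which makes \<open>q\<close> linear.\<close>

definition reduce_along :: "('a::real_vector \<Rightarrow> real) \<Rightarrow> 'a \<Rightarrow> 'a \<Rightarrow> real" where
  "reduce_along q y x = (INF t\<in>{0..}. q (x + t *\<^sub>R y) - t * q y)"

lemma reduce_along_le:
  assumes q: "sublinear q" and "0 \<le> t"
  shows "reduce_along q y x \<le> q (x + t *\<^sub>R y) - t * q y"
proof -
  have "- q (- x) \<le> q (x + s *\<^sub>R y) - s * q y" if "0 \<le> s" for s
    using sublinear_add[OF q, of "x + s *\<^sub>R y" "- x"] sublinear_scaleR[OF q that] by simp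
  then have "bdd_below ((\<lambda>t. q (x + t *\<^sub>R y) - t * q y) ` {0..})"
    by (intro bdd_belowI[of _ "- q (- x)"]) auto
  then show ?thesis unfolding reduce_along_def using assms by (intro cInf_lower) auto
qed

lemma reduce_along_greatest:
  "(\<And>t. 0 \<le> t \<Longrightarrow> c \<le> q (x + t *\<^sub>R y) - t * q y) \<Longrightarrow> c \<le> reduce_along q y x"
  unfolding reduce_along_def by (intro cInf_greatest) auto

lemma sublinear_reduce_along:
  assumes q: "sublinear q" shows "sublinear (reduce_along q y)"
  unfolding sublinear_def
proof (intro conjI allI impI)
  fix x1 x2
  have "reduce_along q y (x1 + x2) - (q (x2 + t2 *\<^sub>R y) - t2 * q y) \<le> reduce_along q y x1"
    if t2: "0 \<le> t2" for t2
  proof (rule reduce_along_greatest)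
    fix t1 :: real assume t1: "0 \<le> t1"
    have "reduce_along q y (x1 + x2) \<le> q ((x1 + x2) + (t1 + t2) *\<^sub>R y) - (t1 + t2) * q y"
      using t1 t2 by (intro reduce_along_le[OF q]) simp
    also have "q ((x1 + x2) + (t1 + t2) *\<^sub>R y) = q ((x1 + t1 *\<^sub>R y) + (x2 + t2 *\<^sub>R y))"
      by (simp add: algebra_simps)
    also have "\<dots> \<le> q (x1 + t1 *\<^sub>R y) + q (x2 + t2 *\<^sub>R y)" by (rule sublinear_add[OF q])
    finally show "reduce_along q y (x1 + x2) - (q (x2 + t2 *\<^sub>R y) - t2 * q y)
        \<le> q (x1 + t1 *\<^sub>R y) - t1 * q y"
      by (simp add: algebra_simps)
  qed
  then have "reduce_along q y (x1 + x2) - reduce_along q y x1 \<le> reduce_along q y x2"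
    by (intro reduce_along_greatest) (simp add: algebra_simps)
  then show "reduce_along q y (x1 + x2) \<le> reduce_along q y x1 + reduce_along q y x2" by simp
next
  fix s :: real and x :: 'a assume s: "0 < s"
  have "reduce_along q y (s *\<^sub>R x) / s \<le> reduce_along q y x"
  proof (rule reduce_along_greatest)
    fix t :: real assume t: "0 \<le> t"
    have "reduce_along q y (s *\<^sub>R x) \<le> q (s *\<^sub>R x + (s * t) *\<^sub>R y) - (s * t) * q y"
      using s t by (intro reduce_along_le[OF q]) simp
    also have "q (s *\<^sub>R x + (s * t) *\<^sub>R y) = s * q (x + t *\<^sub>R y)"
      using sublinear_scaleR[OF q, of s "x + t *\<^sub>R y"] s by (simp add: scaleR_add_right)
    finally show "reduce_along q y (s *\<^sub>R x) / s \<le> q (x + t *\<^sub>R y) - t * q y"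
      using s by (simp add: field_simps)
  qed
  then show "reduce_along q y (s *\<^sub>R x) \<le> s * reduce_along q y x" using s by (simp add: field_simps)
qed

lemma reduce_along_le_self: "sublinear q \<Longrightarrow> reduce_along q y \<le> q"
  using reduce_along_le[of q 0 y] by (simp add: le_fun_def)

lemma reduce_along_minus: "sublinear q \<Longrightarrow> reduce_along q y (- y) \<le> - q y"
  using reduce_along_le[of q 1 y "- y"] sublinear_0[of q] by simp

lemma sublinear_INF_chain:
  fixes p :: "'a::real_vector \<Rightarrow> real"
  assumes "C \<noteq> {}" and sub: "\<And>q. q \<in> C \<Longrightarrow> sublinear q \<and> q \<le> p"
    and chain: "\<And>q q'. q \<in> C \<Longrightarrow> q' \<in> C \<Longrightarrow> q \<le> q' \<or> q' \<le> q"
  shows "sublinear (\<lambda>x. INF q\<in>C. q x)" and "\<And>q. q \<in> C \<Longrightarrow> (\<lambda>x. INF q\<in>C. q x) \<le> q"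
proof -
  define i where "i x = (INF q\<in>C. q x)" for x
  have bdd: "bdd_below ((\<lambda>q. q x) ` C)" for x
  proof (rule bdd_belowI[of _ "- p (- x)"])
    fix v assume "v \<in> (\<lambda>q. q x) ` C"
    then obtain q where q: "q \<in> C" "v = q x" by auto
    then have "- p (- x) \<le> - q (- x)" using sub by (simp add: le_fun_def)
    also have "\<dots> \<le> q x" using sub q by (simp add: sublinear_minus_le)
    finally show "- p (- x) \<le> v" using q by simp
  qed
  have i_le: "i x \<le> q x" if "q \<in> C" for q x
    unfolding i_def using that bdd by (intro cInf_lower) auto
  have i_ge: "c \<le> i x" if "\<And>q. q \<in> C \<Longrightarrow> c \<le> q x" for c x
    unfolding i_def using that \<open>C \<noteq> {}\<close> by (intro cInf_greatest) auto
  have "sublinear i"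
    unfolding sublinear_def
  proof (intro conjI allI impI)
    fix x y
    have "i (x + y) - q2 y \<le> i x" if q2: "q2 \<in> C" for q2
    proof (rule i_ge)
      fix q1 assume q1: "q1 \<in> C"
      txt \<open>Along a chain, the smaller of \<open>q1\<close>, \<open>q2\<close> bounds \<open>i (x + y)\<close> by its subadditivity.\<close>
      from chain[OF q1 q2] obtain q where q: "q \<in> C" "q \<le> q1" "q \<le> q2"
        using q1 q2 by auto
      have "i (x + y) \<le> q x + q y" using i_le[OF q(1)] sublinear_add sub q(1) by (meson order_trans)
      moreover have "q x \<le> q1 x" "q y \<le> q2 y" using q by (simp_all add: le_fun_def)
      ultimately show "i (x + y) - q2 y \<le> q1 x" by linarith
    qed
    then have "i (x + y) - i x \<le> i y" by (intro i_ge) (simp add: algebra_simps)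
    then show "i (x + y) \<le> i x + i y" by simp
  next
    fix t :: real and x assume t: "0 < t"
    have "i (t *\<^sub>R x) / t \<le> i x"
    proof (rule i_ge)
      fix q assume q: "q \<in> C"
      have "i (t *\<^sub>R x) \<le> t * q x"
        using i_le[OF q] sublinear_scaleR_le[OF _ t] sub[OF q] by (meson order_trans)
      then show "i (t *\<^sub>R x) / t \<le> q x" using t by (simp add: field_simps)
    qed
    then show "i (t *\<^sub>R x) \<le> t * i x" using t by (simp add: field_simps)
  qed
  then show "sublinear (\<lambda>x. INF q\<in>C. q x)" unfolding i_def .
  show "(\<lambda>x. INF q\<in>C. q x) \<le> q" if "q \<in> C" for q
    using i_le[OF that] by (simp add: i_def le_fun_def)
qed

lemma minimal_sublinear_below:
  fixes p :: "'a::real_vector \<Rightarrow> real"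
  assumes p: "sublinear p"
  obtains m where "sublinear m" "m \<le> p" "\<And>q. sublinear q \<Longrightarrow> q \<le> m \<Longrightarrow> q = m"
proof -
  define A where "A = {q. sublinear q \<and> q \<le> p}"
  have po: "partial_order_on A (relation_of (\<lambda>q1 q2. q2 \<le> q1) A)"
    by (rule partial_order_on_relation_ofI) auto
  have "\<exists>u\<in>A. \<forall>q\<in>C. u \<le> q" if C: "C \<in> Chains (relation_of (\<lambda>q1 q2. q2 \<le> q1) A)" for C
  proof (cases "C = {}")
    case True
    then show ?thesis using p by (auto simp: A_def)
  next
    case False
    have CA: "C \<subseteq> A" using Chains_relation_of[OF C] .
    have chain: "q \<le> q' \<or> q' \<le> q" if "q \<in> C" "q' \<in> C" for q q'
      using C that unfolding Chains_def relation_of_def by auto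
    have "sublinear (\<lambda>x. INF q\<in>C. q x)" "(\<lambda>x. INF q\<in>C. q x) \<le> q" if "q \<in> C" for q
      using CA chain that by (intro sublinear_INF_chain[OF False, of p]; auto simp: A_def)+
    moreover obtain q0 where "q0 \<in> C" using False by auto
    ultimately show ?thesis
      using CA unfolding A_def by (intro bexI[of _ "\<lambda>x. INF q\<in>C. q x"]) (auto intro: order_trans)
  qed
  from predicate_Zorn[OF po this] obtain m where "m \<in> A" "\<And>q. q \<in> A \<Longrightarrow> q \<le> m \<Longrightarrow> q = m"
    by blast
  then show ?thesis by (intro that) (auto simp: A_def intro: order_trans)
qed

lemma minimal_sublinear_linear:
  assumes m: "sublinear m" and min: "\<And>q. sublinear q \<Longrightarrow> q \<le> m \<Longrightarrow> q = m"
  shows "linear m"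
proof -
  have minus: "m (- y) = - m y" for y
  proof -
    have "reduce_along m y = m"
      by (intro min sublinear_reduce_along reduce_along_le_self m)
    then have "m (- y) \<le> - m y" using reduce_along_minus[OF m, of y] by simp
    with sublinear_minus_le[OF m, of "- y"] show ?thesis by simp
  qed
  have add: "m (x + y) = m x + m y" for x y
    using sublinear_add[OF m, of x y] sublinear_add[OF m, of "x + y" "- y"] minus[of y] by simp
  have scale: "m (c *\<^sub>R x) = c * m x" for c x
    using sublinear_scaleR[OF m, of c x] sublinear_scaleR[OF m, of "- c" x] minus[of "(- c) *\<^sub>R x"]
    by (cases "0 \<le> c") auto
  show ?thesis by (rule linearI) (simp_all add: add scale)
qed

theorem sublinear_supporting_linear:
  fixes p :: "'a::real_vector \<Rightarrow> real"
  assumes p: "sublinear p"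
  obtains f where "linear f" "\<And>x. f x \<le> p x" "f c = p c"
proof -
  txt \<open>Minimising below \<open>reduce_along p c\<close> rather than \<open>p\<close> is what forces \<open>m c \<ge> p c\<close>.\<close>
  obtain m where m: "sublinear m" "m \<le> reduce_along p c" "\<And>q. sublinear q \<Longrightarrow> q \<le> m \<Longrightarrow> q = m"
    using minimal_sublinear_below[OF sublinear_reduce_along[OF p]] by blast
  have lin: "linear m" using m by (intro minimal_sublinear_linear) auto
  have le: "m x \<le> p x" for x
    using m(2) reduce_along_le_self[OF p, of c] by (auto simp: le_fun_def intro: order_trans)
  have "- m c \<le> - p c"
    using m(2) reduce_along_minus[OF p, of c] linear_neg[OF lin, of c] by (metis le_fun_def order_trans)
  with le[of c] have "m c = p c" by simp
  with lin le show ?thesis by (rule that)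
qed

section \<open>Lwc-elements\<close>

definition Lwc_elem :: "'a::banach_lattice \<Rightarrow> bool" where
  "Lwc_elem z \<longleftrightarrow> Lwc_set {z}"

lemma Lwc_elem_iff:
  "Lwc_elem z \<longleftrightarrow> (\<forall>x. (\<forall>n. labs (x n) \<le> labs z) \<and> disjoint_seq x \<longrightarrow> (\<lambda>n. norm (x n)) \<longlonglongrightarrow> 0)"
  by (simp add: Lwc_elem_def Lwc_set_def sol_def labs_le_iff)

lemma Lwc_elemD:
  "Lwc_elem z \<Longrightarrow> (\<And>n. labs (x n) \<le> labs z) \<Longrightarrow> disjoint_seq x \<Longrightarrow> (\<lambda>n. norm (x n)) \<longlonglongrightarrow> 0"
  by (auto simp: Lwc_elem_iff)

lemma Lwc_elem_solid: "Lwc_elem z \<Longrightarrow> labs y \<le> labs z \<Longrightarrow> Lwc_elem y"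
  unfolding Lwc_elem_iff by (meson order_trans)

lemma Lwc_elem_0: "Lwc_elem (0::'a::banach_lattice)"
proof -
  have "(\<lambda>n. norm (x n)) = (\<lambda>n. 0)" if "\<forall>n. labs (x n) \<le> labs 0" for x :: "nat \<Rightarrow> 'a"
    using that norm_le_if_labs_le by fastforce
  then show ?thesis unfolding Lwc_elem_iff by (metis tendsto_const)
qed

lemma disjoint_seq_split:
  fixes x :: "nat \<Rightarrow> 'a::banach_lattice"
  assumes x: "disjoint_seq x" and le: "\<And>n. labs (x n) \<le> labs y + w n" and w: "\<And>n. 0 \<le> w n"
  obtains u v where "disjoint_seq u" "\<And>n. labs (u n) \<le> labs y"
    "disjoint_seq v" "\<And>n. 0 \<le> v n" "\<And>n. v n \<le> w n"
    "\<And>n. norm (x n) \<le> norm (u n) + norm (v n)"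
proof
  define u where "u n = inf (labs (x n)) (labs y)" for n
  define v where "v n = labs (x n) - u n" for n
  have u: "0 \<le> u n" "u n \<le> labs (x n)" for n
    unfolding u_def by (simp_all add: labs_nonneg)
  show v: "0 \<le> v n" for n using u(2) by (simp add: v_def)
  show "v n \<le> w n" for n unfolding v_def u_def using diff_inf_le[OF le w] .
  have vx: "v n \<le> labs (x n)" for n unfolding v_def using u(1)[of n] by simp
  have disj: "inf (labs (x n)) (labs (x m)) = 0" if "n \<noteq> m" for n m
    using x that by (simp add: disjoint_seq_def)
  have "inf (u n) (u m) = 0" "inf (v n) (v m) = 0" if "n \<noteq> m" for n m
    using inf_eq_0_mono[OF disj[OF that] u(1) u(2) u(1) u(2)]
      inf_eq_0_mono[OF disj[OF that] v vx v vx] by simp_all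
  then show "disjoint_seq u" "disjoint_seq v"
    unfolding disjoint_seq_def using u(1) v by (simp_all add: labs_of_nonneg)
  show "labs (u n) \<le> labs y" for n using u(1) by (simp add: labs_of_nonneg u_def)
  show "norm (x n) \<le> norm (u n) + norm (v n)" for n
    using norm_triangle_ineq[of "u n" "v n"] by (simp add: v_def norm_labs)
qed

lemma Lwc_elem_add:
  assumes y: "Lwc_elem y" and z: "Lwc_elem (z::'a::banach_lattice)"
  shows "Lwc_elem (y + z)"
  unfolding Lwc_elem_iff
proof (intro allI impI, elim conjE)
  fix x :: "nat \<Rightarrow> 'a" assume le: "\<forall>n. labs (x n) \<le> labs (y + z)" and x: "disjoint_seq x"
  have le_sum: "labs (x n) \<le> labs y + labs z" for n
    using le labs_triangle[of y z] by (meson order_trans)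
  obtain u v
    where u: "disjoint_seq u" "\<And>n. labs (u n) \<le> labs y"
      and v: "disjoint_seq v" "\<And>n. 0 \<le> v n" "\<And>n. v n \<le> labs z"
      and x_le: "\<And>n. norm (x n) \<le> norm (u n) + norm (v n)"
    using disjoint_seq_split[OF x le_sum labs_nonneg] by blast
  have "(\<lambda>n. norm (u n)) \<longlonglongrightarrow> 0" using Lwc_elemD[OF y u(2) u(1)] .
  moreover have "(\<lambda>n. norm (v n)) \<longlonglongrightarrow> 0" using v by (intro Lwc_elemD[OF z]) (simp_all add: labs_of_nonneg)
  ultimately have sum_null: "(\<lambda>n. norm (u n) + norm (v n)) \<longlonglongrightarrow> 0" using tendsto_add by fastforce
  have "\<forall>n. norm (norm (x n)) \<le> norm (u n) + norm (v n)" using x_le by simp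
  from Lim_null_comparison[OF always_eventually[OF this] sum_null]
  show "(\<lambda>n. norm (x n)) \<longlonglongrightarrow> 0" .
qed

lemma Lwc_elem_scaleR:
  assumes z: "Lwc_elem (z::'a::banach_lattice)" shows "Lwc_elem (c *\<^sub>R z)"
proof -
  have multiple: "Lwc_elem (real k *\<^sub>R z)" for k
    by (induction k) (simp_all add: Lwc_elem_0 Lwc_elem_add z algebra_simps)
  obtain k :: nat where k: "\<bar>c\<bar> \<le> real k" using real_arch_simple by blast
  have "labs (c *\<^sub>R z) \<le> labs (real k *\<^sub>R z)"
    using k labs_nonneg[of z] by (simp add: labs_scaleR scaleR_right_mono)
  then show ?thesis using multiple Lwc_elem_solid by blast
qed

lemma Lwc_elem_diff: "Lwc_elem (y::'a::banach_lattice) \<Longrightarrow> Lwc_elem z \<Longrightarrow> Lwc_elem (y - z)"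
  using Lwc_elem_add[of y "(-1) *\<^sub>R z"] Lwc_elem_scaleR[of z "-1"] by simp

lemma Lwc_elem_limit:
  assumes z: "\<And>k. Lwc_elem (z k)" and lim: "z \<longlonglongrightarrow> (l::'a::banach_lattice)"
  shows "Lwc_elem l"
  unfolding Lwc_elem_iff
proof (intro allI impI, elim conjE)
  fix x :: "nat \<Rightarrow> 'a" assume le: "\<forall>n. labs (x n) \<le> labs l" and x: "disjoint_seq x"
  show "(\<lambda>n. norm (x n)) \<longlonglongrightarrow> 0"
  proof (rule LIMSEQ_I)
    fix r :: real assume r: "0 < r"
    obtain k where k: "norm (z k - l) < r / 2" using LIMSEQ_D[OF lim, of "r / 2"] r by auto
    have "labs l \<le> labs (z k) + labs (l - z k)" using labs_triangle[of "z k" "l - z k"] by simp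
    then have le_sum: "labs (x n) \<le> labs (z k) + labs (l - z k)" for n
      using le by (meson order_trans)
    obtain u v
      where u: "disjoint_seq u" "\<And>n. labs (u n) \<le> labs (z k)"
        and v: "disjoint_seq v" "\<And>n. 0 \<le> v n" "\<And>n. v n \<le> labs (l - z k)"
        and x_le: "\<And>n. norm (x n) \<le> norm (u n) + norm (v n)"
      using disjoint_seq_split[OF x le_sum labs_nonneg] by blast
    obtain N where N: "\<And>n. n \<ge> N \<Longrightarrow> norm (u n) < r / 2"
      using LIMSEQ_D[OF Lwc_elemD[OF z u(2) u(1)], of "r / 2"] r by auto
    have v_small: "norm (v n) \<le> norm (z k - l)" for n
      using norm_mono_nonneg[OF v(2,3)] by (simp add: norm_labs norm_minus_commute)
    have "norm (x n) < r" if "n \<ge> N" for n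
      using x_le[of n] N[OF that] k v_small[of n] by linarith
    then show "\<exists>N. \<forall>n\<ge>N. norm (norm (x n) - 0) < r" by auto
  qed
qed

section \<open>Norms of band components\<close>

text \<open>For \<open>e, z \<ge> 0\<close>, \<open>band_norm e z\<close> is the norm of the component of \<open>z\<close> in the band generated
  by \<open>e\<close> whenever that component exists; it is defined without any completeness assumption.\<close>

definition band_norm :: "'a::banach_lattice \<Rightarrow> 'a \<Rightarrow> real" where
  "band_norm e z = (SUP r\<in>{0..}. norm (inf z (r *\<^sub>R e)))"

lemma norm_inf_scaleR_le_band_norm:
  fixes e z :: "'a::banach_lattice"
  assumes "0 \<le> z" "0 \<le> e" "0 \<le> r"
  shows "norm (inf z (r *\<^sub>R e)) \<le> band_norm e z"
proof -
  have "norm (inf z (s *\<^sub>R e)) \<le> norm z" if "0 \<le> s" for s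
    using assms that by (intro norm_mono_nonneg) (simp_all add: scaleR_nonneg_nonneg)
  then have "bdd_above ((\<lambda>r. norm (inf z (r *\<^sub>R e))) ` {0..})"
    by (intro bdd_aboveI[of _ "norm z"]) auto
  then show ?thesis unfolding band_norm_def using assms by (intro cSup_upper) auto
qed

lemma band_norm_le:
  "(\<And>r. 0 \<le> r \<Longrightarrow> norm (inf z (r *\<^sub>R e)) \<le> c) \<Longrightarrow> band_norm e (z::'a::banach_lattice) \<le> c"
  unfolding band_norm_def by (rule cSup_least) auto

lemma band_norm_nonneg: "0 \<le> z \<Longrightarrow> 0 \<le> e \<Longrightarrow> 0 \<le> band_norm e (z::'a::banach_lattice)"
  using norm_inf_scaleR_le_band_norm[of z e 0] norm_ge_zero[of "inf z (0 *\<^sub>R e)"] by linarith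

lemma band_norm_mono:
  fixes e z z' :: "'a::banach_lattice"
  assumes "0 \<le> z" "z \<le> z'" "0 \<le> e"
  shows "band_norm e z \<le> band_norm e z'"
proof (rule band_norm_le)
  fix r :: real assume r: "0 \<le> r"
  have "norm (inf z (r *\<^sub>R e)) \<le> norm (inf z' (r *\<^sub>R e))"
    using assms r by (intro norm_mono_nonneg inf_mono) (simp_all add: scaleR_nonneg_nonneg)
  also have "\<dots> \<le> band_norm e z'" using assms r by (intro norm_inf_scaleR_le_band_norm) auto
  finally show "norm (inf z (r *\<^sub>R e)) \<le> band_norm e z'" .
qed

lemma band_norm_le_norm: "0 \<le> z \<Longrightarrow> 0 \<le> e \<Longrightarrow> band_norm e z \<le> norm (z::'a::banach_lattice)"
  by (intro band_norm_le norm_mono_nonneg) (simp_all add: scaleR_nonneg_nonneg)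

lemma sublinear_band_norm_pprt:
  assumes e: "0 \<le> (e::'a::banach_lattice)"
  shows "sublinear (\<lambda>w. band_norm e (pprt w))"
  unfolding sublinear_def
proof (intro conjI allI impI)
  fix v w :: 'a
  show "band_norm e (pprt (v + w)) \<le> band_norm e (pprt v) + band_norm e (pprt w)"
  proof (rule band_norm_le)
    fix r :: real assume r: "0 \<le> r"
    have re: "0 \<le> r *\<^sub>R e" using r e by (simp add: scaleR_nonneg_nonneg)
    have "inf (pprt (v + w)) (r *\<^sub>R e) \<le> inf (pprt v + pprt w) (r *\<^sub>R e)"
      using pprt_add_le by (rule inf_mono) simp
    also have "\<dots> \<le> inf (pprt v) (r *\<^sub>R e) + inf (pprt w) (r *\<^sub>R e)"
      using re by (intro inf_add_le_add_inf) simp_all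
    finally have "norm (inf (pprt (v + w)) (r *\<^sub>R e))
        \<le> norm (inf (pprt v) (r *\<^sub>R e) + inf (pprt w) (r *\<^sub>R e))"
      using re by (intro norm_mono_nonneg) simp_all
    also have "\<dots> \<le> norm (inf (pprt v) (r *\<^sub>R e)) + norm (inf (pprt w) (r *\<^sub>R e))"
      by (rule norm_triangle_ineq)
    also have "\<dots> \<le> band_norm e (pprt v) + band_norm e (pprt w)"
      using r e by (intro add_mono norm_inf_scaleR_le_band_norm) simp_all
    finally show "norm (inf (pprt (v + w)) (r *\<^sub>R e)) \<le> band_norm e (pprt v) + band_norm e (pprt w)" .
  qed
next
  fix t :: real and x :: 'a assume t: "0 < t"
  show "band_norm e (pprt (t *\<^sub>R x)) \<le> t * band_norm e (pprt x)"
  proof (rule band_norm_le)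
    fix r :: real assume r: "0 \<le> r"
    have "inf (pprt (t *\<^sub>R x)) (r *\<^sub>R e) = t *\<^sub>R inf (pprt x) ((r / t) *\<^sub>R e)"
      using t by (simp add: pprt_scaleR scaleR_inf_distrib)
    then have "norm (inf (pprt (t *\<^sub>R x)) (r *\<^sub>R e)) = t * norm (inf (pprt x) ((r / t) *\<^sub>R e))"
      using t by simp
    also have "\<dots> \<le> t * band_norm e (pprt x)"
      using t r e by (intro mult_left_mono norm_inf_scaleR_le_band_norm) simp_all
    finally show "norm (inf (pprt (t *\<^sub>R x)) (r *\<^sub>R e)) \<le> t * band_norm e (pprt x)" .
  qed
qed

lemma band_norm_disjoint_tendsto_0:
  fixes e :: "nat \<Rightarrow> 'a::banach_lattice"
  assumes z: "Lwc_elem z" and e: "\<And>n. 0 \<le> e n" and disj: "\<And>n m. n \<noteq> m \<Longrightarrow> inf (e n) (e m) = 0"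
  shows "(\<lambda>n. band_norm (e n) (labs z)) \<longlonglongrightarrow> 0"
proof -
  have "\<exists>r\<ge>0. band_norm (e n) (labs z) \<le> 2 * norm (inf (labs z) (r *\<^sub>R e n))" for n
  proof (cases "band_norm (e n) (labs z) \<le> 0")
    case False
    then have "band_norm (e n) (labs z) / 2 < band_norm (e n) (labs z)" by simp
    from less_cSupD[OF _ this[unfolded band_norm_def]] obtain r
      where "0 \<le> r" "band_norm (e n) (labs z) / 2 < norm (inf (labs z) (r *\<^sub>R e n))"
      by (auto simp: band_norm_def)
    then show ?thesis by (intro exI[of _ r]) simp
  next
    case True
    show ?thesis using True norm_ge_zero[of "inf (labs z) (0 *\<^sub>R e n)"]
      by (intro exI[of _ 0] conjI order_refl) linarith
  qed
  then obtain r where r: "\<And>n. 0 \<le> r n"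
    and band_le: "\<And>n. band_norm (e n) (labs z) \<le> 2 * norm (inf (labs z) (r n *\<^sub>R e n))"
    by metis
  define w where "w n = inf (labs z) (r n *\<^sub>R e n)" for n
  have w: "0 \<le> w n" "w n \<le> labs z" for n
    unfolding w_def using r e by (simp_all add: scaleR_nonneg_nonneg labs_nonneg)
  have "disjoint_seq w"
    unfolding disjoint_seq_def
  proof (intro allI impI)
    fix n m :: nat assume "n \<noteq> m"
    then have "inf (r n *\<^sub>R e n) (r m *\<^sub>R e m) = 0" using disj e r by (intro inf_scaleR_eq_0) auto
    then show "inf (labs (w n)) (labs (w m)) = 0"
      using w r e by (simp add: labs_of_nonneg) (rule inf_eq_0_mono, auto simp: w_def scaleR_nonneg_nonneg)
  qed
  with w have "(\<lambda>n. norm (w n)) \<longlonglongrightarrow> 0" by (intro Lwc_elemD[OF z]) (simp_all add: labs_of_nonneg)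
  then have w_null: "(\<lambda>n. 2 * norm (w n)) \<longlonglongrightarrow> 0" using tendsto_mult_right_zero by blast
  have "\<forall>n. norm (band_norm (e n) (labs z)) \<le> 2 * norm (w n)"
    using band_le band_norm_nonneg[OF labs_nonneg e] unfolding w_def by (metis abs_of_nonneg real_norm_def)
  from Lim_null_comparison[OF always_eventually[OF this] w_null] show ?thesis .
qed

section \<open>Limitedly L-weakly compact operators\<close>

lemma limited_set_singleton: "limited_set {y}"
  unfolding limited_set_def
proof (intro conjI allI impI)
  fix f :: "nat \<Rightarrow> 'a \<Rightarrow> real" and r :: real
  assume f: "(\<forall>n. bounded_linear (f n)) \<and> (\<forall>x. (\<lambda>n. f n x) \<longlonglongrightarrow> 0)" and r: "0 < r"
  then obtain N where "\<forall>n\<ge>N. norm (f n y - 0) < r" using LIMSEQ_D by blast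
  then show "\<exists>N. \<forall>n\<ge>N. \<forall>x\<in>{y}. \<bar>f n x\<bar> < r" by auto
qed simp

lemma limited_set_tendsto:
  fixes f :: "nat \<Rightarrow> 'a::real_normed_vector \<Rightarrow> real"
  assumes A: "limited_set A" and f: "\<And>n. bounded_linear (f n)" "\<And>x. (\<lambda>n. f n x) \<longlonglongrightarrow> 0"
    and a: "\<And>n. a n \<in> A"
  shows "(\<lambda>n. f n (a n)) \<longlonglongrightarrow> 0"
proof (rule LIMSEQ_I)
  fix r :: real assume "0 < r"
  with A f obtain N where "\<forall>n\<ge>N. \<forall>x\<in>A. \<bar>f n x\<bar> < r"
    unfolding limited_set_def by blast
  with a show "\<exists>N. \<forall>n\<ge>N. norm (f n (a n) - 0) < r" by auto
qed

lemma band_norm_norming_functional: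
  fixes x c :: "'a::banach_lattice"
  assumes le: "labs x \<le> labs c"
  obtains \<psi> where "bounded_linear \<psi>" "\<And>w. \<bar>\<psi> w\<bar> \<le> band_norm (labs x) (labs w)"
    "norm x \<le> 2 * \<psi> c"
proof -
  let ?e = "labs x"
  let ?g = "\<lambda>w. band_norm ?e (pprt w)"
  have e: "0 \<le> ?e" by (rule labs_nonneg)
  have g_le: "norm (inf (pprt w) ?e) \<le> ?g w" for w
    using norm_inf_scaleR_le_band_norm[OF zero_le_pprt e, of 1 w] by simp
  have "?e = inf (labs c) ?e" using le by (simp add: inf_absorb2)
  also have "\<dots> \<le> inf (pprt c) ?e + inf (pprt (- c)) ?e"
    unfolding labs_eq_pprt using e by (intro inf_add_le_add_inf) simp_all
  finally have "norm ?e \<le> norm (inf (pprt c) ?e + inf (pprt (- c)) ?e)"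
    using e by (intro norm_mono_nonneg)
  then have norm_x_le: "norm x \<le> norm (inf (pprt c) ?e) + norm (inf (pprt (- c)) ?e)"
    using norm_triangle_ineq by (simp add: norm_labs) (rule order_trans)
  obtain s :: real where s: "s = 1 \<or> s = -1" and x_le: "norm x \<le> 2 * ?g (s *\<^sub>R c)"
  proof (cases "norm (inf (pprt (- c)) ?e) \<le> norm (inf (pprt c) ?e)")
    case True
    then show ?thesis using that[of 1] norm_x_le g_le[of c] by simp
  next
    case False
    then show ?thesis using that[of "-1"] norm_x_le g_le[of "- c"] by simp
  qed
  obtain f where f: "linear f" "\<And>w. f w \<le> ?g w" "f (s *\<^sub>R c) = ?g (s *\<^sub>R c)"
    using sublinear_supporting_linear[OF sublinear_band_norm_pprt[OF e]] by blast
  have f_abs: "\<bar>f w\<bar> \<le> band_norm ?e (labs w)" for w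
    using f(2)[of w] f(2)[of "- w"] linear_neg[OF f(1), of w]
      band_norm_mono[OF zero_le_pprt pprt_le_labs e, of w] band_norm_mono[OF zero_le_pprt pprt_le_labs e, of "- w"]
    by (simp add: labs_minus)
  have f_bl: "bounded_linear f"
  proof (rule bounded_linear_intro[where K=1])
    show "norm (f w) \<le> norm w * 1" for w
      using f_abs[of w] band_norm_le_norm[OF labs_nonneg e, of w] by (simp add: norm_labs)
  qed (simp_all add: linear_add[OF f(1)] linear_scale[OF f(1)])
  show ?thesis
  proof (rule that)
    show "bounded_linear (\<lambda>w. s * f w)" using f_bl by (rule bounded_linear_const_mult)
    show "\<bar>s * f w\<bar> \<le> band_norm ?e (labs w)" for w using s f_abs[of w] by auto
    show "norm x \<le> 2 * (s * f c)"
      using x_le f(3) linear_scale[OF f(1), of s c] s by auto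
  qed
qed

lemma Lwc_set_image_limited_set:
  fixes T :: "'a::banach_lattice \<Rightarrow> 'a"
  assumes T: "bounded_linear T" and Lwc: "\<And>y. Lwc_elem (T y)" and A: "limited_set A"
  shows "Lwc_set (T ` A)"
  unfolding Lwc_set_def
proof (intro allI impI, elim conjE)
  fix x :: "nat \<Rightarrow> 'a" assume x_sol: "\<forall>n. x n \<in> sol (T ` A)" and x: "disjoint_seq x"
  have "\<exists>a\<in>A. labs (x n) \<le> labs (T a)" for n
    using x_sol by (auto simp: sol_def labs_le_iff)
  then obtain a where a: "\<And>n. a n \<in> A" and x_le: "\<And>n. labs (x n) \<le> labs (T (a n))"
    by metis
  have "\<exists>\<psi>. bounded_linear \<psi> \<and> (\<forall>w. \<bar>\<psi> w\<bar> \<le> band_norm (labs (x n)) (labs w))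
      \<and> norm (x n) \<le> 2 * \<psi> (T (a n))" for n
    by (rule band_norm_norming_functional[OF x_le[of n]]) blast
  then obtain \<psi> where \<psi>: "\<And>n. bounded_linear (\<psi> n)"
    "\<And>n w. \<bar>\<psi> n w\<bar> \<le> band_norm (labs (x n)) (labs w)" "\<And>n. norm (x n) \<le> 2 * \<psi> n (T (a n))"
    by metis
  have null: "(\<lambda>n. \<psi> n (T v)) \<longlonglongrightarrow> 0" for v
  proof (rule Lim_null_comparison[OF always_eventually])
    show "(\<lambda>n. band_norm (labs (x n)) (labs (T v))) \<longlonglongrightarrow> 0"
      using Lwc x by (intro band_norm_disjoint_tendsto_0) (auto simp: labs_nonneg disjoint_seq_def)
  qed (simp add: \<psi>(2))
  have "bounded_linear (\<lambda>v. \<psi> n (T v))" for n using \<psi>(1) T by (rule bounded_linear_compose)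
  from limited_set_tendsto[OF A this null a] have "(\<lambda>n. \<psi> n (T (a n))) \<longlonglongrightarrow> 0" .
  then have twice_null: "(\<lambda>n. 2 * \<psi> n (T (a n))) \<longlonglongrightarrow> 0" by (rule tendsto_mult_right_zero)
  have "\<forall>n. norm (norm (x n)) \<le> 2 * \<psi> n (T (a n))" using \<psi>(3) by simp
  from Lim_null_comparison[OF always_eventually[OF this] twice_null]
  show "(\<lambda>n. norm (x n)) \<longlonglongrightarrow> 0" .
qed

lemma limitedly_Lwc_iff:
  "limitedly_Lwc T \<longleftrightarrow> bounded_linear T \<and> (\<forall>y. Lwc_elem (T (y::'a::banach_lattice)))"
proof
  assume T: "limitedly_Lwc T"
  then have "Lwc_set (T ` {y})" for y using limited_set_singleton unfolding limitedly_Lwc_def by blast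
  with T show "bounded_linear T \<and> (\<forall>y. Lwc_elem (T y))" by (simp add: limitedly_Lwc_def Lwc_elem_def)
next
  assume "bounded_linear T \<and> (\<forall>y. Lwc_elem (T y))"
  then show "limitedly_Lwc T" unfolding limitedly_Lwc_def by (blast intro: Lwc_set_image_limited_set)
qed

lemma limitedly_Lwc_add:
  "limitedly_Lwc S \<Longrightarrow> limitedly_Lwc T \<Longrightarrow> limitedly_Lwc (\<lambda>x. S x + T x)"
  by (simp add: limitedly_Lwc_iff bounded_linear_add Lwc_elem_add)

lemma limitedly_Lwc_diff:
  "limitedly_Lwc S \<Longrightarrow> limitedly_Lwc T \<Longrightarrow> limitedly_Lwc (\<lambda>x. S x - T x)"
  by (simp add: limitedly_Lwc_iff bounded_linear_sub Lwc_elem_diff)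

lemma limitedly_Lwc_scaleR: "limitedly_Lwc T \<Longrightarrow> limitedly_Lwc (\<lambda>x. c *\<^sub>R T x)"
  by (simp add: limitedly_Lwc_iff Lwc_elem_scaleR bounded_linear_scaleR_right bounded_linear_compose)

lemma limitedly_Lwc_compose:
  "limitedly_Lwc S \<Longrightarrow> bounded_linear T \<Longrightarrow> limitedly_Lwc (\<lambda>x. S (T x))"
  by (simp add: limitedly_Lwc_iff bounded_linear_compose)

lemma limitedly_Lwc_of_nonneg:
  assumes T: "bounded_linear T" and Lwc: "\<And>y. 0 \<le> y \<Longrightarrow> Lwc_elem (T y)"
  shows "limitedly_Lwc T"
proof -
  have "Lwc_elem (T y)" for y
  proof -
    have "T y = T (pprt y) - T (pprt (- y))"
      using linear_simps(2)[OF T] pprt_diff_pprt_minus[of y] by metis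
    then show ?thesis using Lwc[OF zero_le_pprt] Lwc_elem_diff by metis
  qed
  with T show ?thesis by (simp add: limitedly_Lwc_iff)
qed

lemma pos_op_bounded_linear: "pos_op T \<Longrightarrow> bounded_linear T"
  by (simp add: pos_op_def)

lemma pos_op_nonneg: "pos_op T \<Longrightarrow> 0 \<le> x \<Longrightarrow> 0 \<le> T x"
  by (simp add: pos_op_def)

lemma pos_op_mono: "pos_op T \<Longrightarrow> x \<le> y \<Longrightarrow> T x \<le> T y"
  using pos_op_nonneg[of T "y - x"] linear_simps(2)[OF pos_op_bounded_linear] by fastforce

lemma pos_op_id: "pos_op (\<lambda>x. x)"
  by (simp add: pos_op_def)

lemma pos_op_zero: "pos_op (\<lambda>x. 0)"
  by (simp add: pos_op_def)

lemma pos_op_add: "pos_op S \<Longrightarrow> pos_op T \<Longrightarrow> pos_op (\<lambda>x. S x + T x)"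
  by (simp add: pos_op_def bounded_linear_add)

lemma pos_op_scaleR: "pos_op T \<Longrightarrow> 0 \<le> c \<Longrightarrow> pos_op (\<lambda>x. c *\<^sub>R T x)"
  by (simp add: pos_op_def bounded_linear_scaleR_right bounded_linear_compose scaleR_nonneg_nonneg)

lemma pos_op_compose: "pos_op S \<Longrightarrow> pos_op T \<Longrightarrow> pos_op (\<lambda>x. S (T x))"
  by (simp add: pos_op_def bounded_linear_compose)

lemma regular_opsI: "pos_op T1 \<Longrightarrow> pos_op T2 \<Longrightarrow> (\<lambda>x. T1 x - T2 x) \<in> regular_ops"
  by (auto simp: regular_ops_def)

lemma regular_opsE:
  assumes "T \<in> regular_ops"
  obtains T1 T2 where "pos_op T1" "pos_op T2" "T = (\<lambda>x. T1 x - T2 x)"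
  using assms by (auto simp: regular_ops_def)

lemma regular_ops_bounded_linear: "T \<in> regular_ops \<Longrightarrow> bounded_linear T"
  by (auto elim!: regular_opsE intro: bounded_linear_sub pos_op_bounded_linear)

lemma regular_ops_add:
  assumes "S \<in> regular_ops" "T \<in> regular_ops" shows "(\<lambda>x. S x + T x) \<in> regular_ops"
proof -
  obtain S1 S2 T1 T2 where "pos_op S1" "pos_op S2" "pos_op T1" "pos_op T2"
    and "S = (\<lambda>x. S1 x - S2 x)" "T = (\<lambda>x. T1 x - T2 x)"
    using assms by (meson regular_opsE)
  then have "(\<lambda>x. S x + T x) = (\<lambda>x. (S1 x + T1 x) - (S2 x + T2 x)) \<and>
      pos_op (\<lambda>x. S1 x + T1 x) \<and> pos_op (\<lambda>x. S2 x + T2 x)"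
    by (auto simp: pos_op_add algebra_simps)
  then show ?thesis by (metis regular_opsI)
qed

lemma regular_ops_diff:
  assumes "S \<in> regular_ops" "T \<in> regular_ops" shows "(\<lambda>x. S x - T x) \<in> regular_ops"
proof -
  obtain T1 T2 where "pos_op T1" "pos_op T2" "T = (\<lambda>x. T1 x - T2 x)"
    using assms(2) by (rule regular_opsE)
  then have "(\<lambda>x. - T x) \<in> regular_ops" using regular_opsI[of T2 T1] by simp
  from regular_ops_add[OF assms(1) this] show ?thesis by simp
qed

lemma rlLwc_opsI:
  "pos_op T1 \<Longrightarrow> limitedly_Lwc T1 \<Longrightarrow> pos_op T2 \<Longrightarrow> limitedly_Lwc T2 \<Longrightarrow>
    (\<lambda>x. T1 x - T2 x) \<in> rlLwc_ops"
  by (auto simp: rlLwc_ops_def)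

lemma rlLwc_opsE:
  assumes "T \<in> rlLwc_ops"
  obtains T1 T2 where "pos_op T1" "limitedly_Lwc T1" "pos_op T2" "limitedly_Lwc T2"
    "T = (\<lambda>x. T1 x - T2 x)"
  using assms by (auto simp: rlLwc_ops_def)

lemma rlLwc_ops_subset_regular_ops: "rlLwc_ops \<subseteq> regular_ops"
  by (auto simp: rlLwc_ops_def regular_ops_def)

lemma rlLwc_ops_zero: "(\<lambda>x. 0) \<in> rlLwc_ops"
  using rlLwc_opsI[OF pos_op_zero _ pos_op_zero] limitedly_Lwc_iff[of "\<lambda>x. 0"]
  by (simp add: Lwc_elem_0)

lemma rlLwc_ops_add:
  assumes "S \<in> rlLwc_ops" "T \<in> rlLwc_ops" shows "(\<lambda>x. S x + T x) \<in> rlLwc_ops"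
proof -
  obtain S1 S2 T1 T2
    where S: "pos_op S1" "limitedly_Lwc S1" "pos_op S2" "limitedly_Lwc S2" "S = (\<lambda>x. S1 x - S2 x)"
      and T: "pos_op T1" "limitedly_Lwc T1" "pos_op T2" "limitedly_Lwc T2" "T = (\<lambda>x. T1 x - T2 x)"
    using assms by (meson rlLwc_opsE)
  have "(\<lambda>x. S x + T x) = (\<lambda>x. (S1 x + T1 x) - (S2 x + T2 x))" by (auto simp: S T algebra_simps)
  then show ?thesis using S T by (simp add: rlLwc_opsI pos_op_add limitedly_Lwc_add)
qed

lemma rlLwc_ops_scaleR:
  assumes "T \<in> rlLwc_ops" shows "(\<lambda>x. c *\<^sub>R T x) \<in> rlLwc_ops"
proof -
  obtain T1 T2
    where T: "pos_op T1" "limitedly_Lwc T1" "pos_op T2" "limitedly_Lwc T2" "T = (\<lambda>x. T1 x - T2 x)"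
    using assms by (rule rlLwc_opsE)
  have pos: "(\<lambda>x. d *\<^sub>R T1 x - d *\<^sub>R T2 x) \<in> rlLwc_ops" "(\<lambda>x. d *\<^sub>R T2 x - d *\<^sub>R T1 x) \<in> rlLwc_ops"
    if "0 \<le> d" for d
    using T that by (simp_all add: rlLwc_opsI pos_op_scaleR limitedly_Lwc_scaleR)
  show ?thesis
  proof (cases "0 \<le> c")
    case True
    have "(\<lambda>x. c *\<^sub>R T x) = (\<lambda>x. c *\<^sub>R T1 x - c *\<^sub>R T2 x)" by (auto simp: T algebra_simps)
    then show ?thesis using pos(1)[OF True] by (simp only:)
  next
    case False
    have "(\<lambda>x. c *\<^sub>R T x) = (\<lambda>x. (- c) *\<^sub>R T2 x - (- c) *\<^sub>R T1 x)" by (auto simp: T algebra_simps)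
    then show ?thesis using pos(2)[of "- c"] False by (simp only:)
  qed
qed

lemma rlLwc_ops_compose:
  assumes "S \<in> rlLwc_ops" "T \<in> rlLwc_ops" shows "S \<circ> T \<in> rlLwc_ops"
proof -
  obtain S1 S2 T1 T2
    where S: "pos_op S1" "limitedly_Lwc S1" "pos_op S2" "limitedly_Lwc S2" "S = (\<lambda>x. S1 x - S2 x)"
      and T: "pos_op T1" "limitedly_Lwc T1" "pos_op T2" "limitedly_Lwc T2" "T = (\<lambda>x. T1 x - T2 x)"
    using assms by (meson rlLwc_opsE)
  have "S \<circ> T = (\<lambda>x. (S1 (T1 x) + S2 (T2 x)) - (S1 (T2 x) + S2 (T1 x)))"
    using linear_simps(2)[OF pos_op_bounded_linear[OF S(1)]] linear_simps(2)[OF pos_op_bounded_linear[OF S(3)]]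
    by (auto simp: S T algebra_simps)
  then show ?thesis using S T
    by (simp add: rlLwc_opsI pos_op_add pos_op_compose limitedly_Lwc_add limitedly_Lwc_compose
        pos_op_bounded_linear)
qed

lemma is_subalgebra_rlLwc_ops: "is_subalgebra rlLwc_ops regular_ops"
  unfolding is_subalgebra_def
  by (simp add: rlLwc_ops_subset_regular_ops rlLwc_ops_zero rlLwc_ops_add rlLwc_ops_scaleR
      rlLwc_ops_compose)

lemma rlLwc_ops_eq_regular_ops_iff:
  "rlLwc_ops = (regular_ops :: ('a::banach_lattice \<Rightarrow> 'a) set) \<longleftrightarrow> limitedly_Lwc (id :: 'a \<Rightarrow> 'a)"
proof
  assume eq: "rlLwc_ops = (regular_ops :: ('a \<Rightarrow> 'a) set)"
  have "(\<lambda>x::'a. x - 0) \<in> regular_ops" by (intro regular_opsI pos_op_id pos_op_zero)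
  then have "(\<lambda>x::'a. x) \<in> rlLwc_ops" using eq by simp
  then obtain T1 T2 where "limitedly_Lwc T1" "limitedly_Lwc T2" "(\<lambda>x::'a. x) = (\<lambda>x. T1 x - T2 x)"
    by (rule rlLwc_opsE)
  then show "limitedly_Lwc (id :: 'a \<Rightarrow> 'a)" using limitedly_Lwc_diff by (simp add: id_def)
next
  assume "limitedly_Lwc (id :: 'a \<Rightarrow> 'a)"
  then have "limitedly_Lwc T" if "bounded_linear T" for T :: "'a \<Rightarrow> 'a"
    using limitedly_Lwc_compose[of id T] that by simp
  then have "regular_ops \<subseteq> (rlLwc_ops :: ('a \<Rightarrow> 'a) set)"
    by (auto elim!: regular_opsE intro!: rlLwc_opsI pos_op_bounded_linear)
  with rlLwc_ops_subset_regular_ops show "rlLwc_ops = (regular_ops :: ('a \<Rightarrow> 'a) set)" by blast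
qed

section \<open>The modulus of a regular operator\<close>

lemma linear_eq_on_nonneg:
  fixes M N :: "'a::banach_lattice \<Rightarrow> 'b::real_vector"
  assumes "linear M" "linear N" "\<And>x. 0 \<le> x \<Longrightarrow> M x = N x"
  shows "M = N"
proof
  fix x
  have "M x = M (pprt x) - M (pprt (- x))" "N x = N (pprt x) - N (pprt (- x))"
    using linear_diff[OF assms(1)] linear_diff[OF assms(2)] pprt_diff_pprt_minus[of x] by metis+
  then show "M x = N x" using assms(3) by simp
qed

lemma op_leI: "bounded_linear S \<Longrightarrow> bounded_linear T \<Longrightarrow> (\<And>x. 0 \<le> x \<Longrightarrow> S x \<le> T x) \<Longrightarrow> op_le S T"
  by (simp add: op_le_def pos_op_def bounded_linear_sub)

lemma op_leD: "op_le S T \<Longrightarrow> 0 \<le> x \<Longrightarrow> S x \<le> T x"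
  by (simp add: op_le_def pos_op_def)

lemma op_le_antisym:
  "M \<in> regular_ops \<Longrightarrow> N \<in> regular_ops \<Longrightarrow> op_le M N \<Longrightarrow> op_le N M \<Longrightarrow> M = N"
  by (intro linear_eq_on_nonneg bounded_linear.linear regular_ops_bounded_linear)
    (auto dest: op_leD intro: antisym)

lemma linear_extension_from_cone:
  fixes P :: "'a::banach_lattice \<Rightarrow> 'b::real_vector"
  assumes add: "\<And>x y. 0 \<le> x \<Longrightarrow> 0 \<le> y \<Longrightarrow> P (x + y) = P x + P y"
    and scale: "\<And>t x. 0 \<le> t \<Longrightarrow> 0 \<le> x \<Longrightarrow> P (t *\<^sub>R x) = t *\<^sub>R P x"
  shows "linear (\<lambda>x. P (pprt x) - P (pprt (- x)))"
proof -
  define Q where "Q x = P (pprt x) - P (pprt (- x))" for x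
  have Q_diff: "Q (a - b) = P a - P b" if a: "0 \<le> a" and b: "0 \<le> b" for a b
  proof -
    let ?d = "a - b"
    have "a + pprt (- ?d) = b + pprt ?d"
      using pprt_diff_pprt_minus[of ?d] by (simp add: algebra_simps)
    then have "P a + P (pprt (- ?d)) = P b + P (pprt ?d)"
      using add[OF a zero_le_pprt] add[OF b zero_le_pprt] by metis
    then show ?thesis unfolding Q_def by (simp add: algebra_simps)
  qed
  have "Q (x + y) = Q x + Q y" for x y
  proof -
    have "x + y = (pprt x + pprt y) - (pprt (- x) + pprt (- y))"
      using pprt_diff_pprt_minus[of x] pprt_diff_pprt_minus[of y] by (simp add: algebra_simps)
    then have "Q (x + y) = P (pprt x + pprt y) - P (pprt (- x) + pprt (- y))"
      using Q_diff by (metis add_nonneg_nonneg zero_le_pprt)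
    then show ?thesis by (simp add: Q_def add algebra_simps)
  qed
  moreover have "Q (t *\<^sub>R x) = t *\<^sub>R Q x" for t x
  proof (cases "0 \<le> t")
    case True
    have "t *\<^sub>R x = t *\<^sub>R pprt x - t *\<^sub>R pprt (- x)"
      using pprt_diff_pprt_minus[of x] by (metis scaleR_diff_right)
    then have "Q (t *\<^sub>R x) = P (t *\<^sub>R pprt x) - P (t *\<^sub>R pprt (- x))"
      using Q_diff True by (metis scaleR_nonneg_nonneg zero_le_pprt)
    then show ?thesis using True by (simp add: Q_def[of x] scale scaleR_diff_right)
  next
    case False
    have "t *\<^sub>R x = (- t) *\<^sub>R pprt (- x) - (- t) *\<^sub>R pprt x"
      using pprt_diff_pprt_minus[of x] by (metis minus_diff_eq scaleR_diff_right scaleR_minus_left)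
    then have "Q (t *\<^sub>R x) = P ((- t) *\<^sub>R pprt (- x)) - P ((- t) *\<^sub>R pprt x)"
      using Q_diff False by (metis neg_0_le_iff_le nle_le scaleR_nonneg_nonneg zero_le_pprt)
    also have "\<dots> = (- t) *\<^sub>R P (pprt (- x)) - (- t) *\<^sub>R P (pprt x)"
      using False by (simp only: scale neg_0_le_iff_le zero_le_pprt linorder_not_le less_imp_le)
    finally show ?thesis by (simp add: Q_def[of x] algebra_simps)
  qed
  ultimately show ?thesis unfolding Q_def[abs_def] by (intro linearI)
qed

lemma dedekind_complete_isLub:
  "dedekind_complete TYPE('a::banach_lattice) \<Longrightarrow> A \<noteq> {} \<Longrightarrow> bdd_above A \<Longrightarrow> \<exists>s. isLub UNIV (A::'a set) s"
  unfolding dedekind_complete_def isLub_def leastP_def isUb_def setle_def setge_def by auto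

text \<open>The Riesz--Kantorovich formula \<open>S\<^sup>+ x = sup S[0, x]\<close>. It is meaningful only for \<open>x \<ge> 0\<close>
  and when the supremum exists; otherwise \<open>SOME\<close> returns an arbitrary value.\<close>

definition pos_part_op :: "('a::banach_lattice \<Rightarrow> 'a) \<Rightarrow> 'a \<Rightarrow> 'a" where
  "pos_part_op S x = (SOME s. isLub UNIV (S ` {0..x}) s)"

context
  fixes S :: "'a::banach_lattice \<Rightarrow> 'a"
  assumes dc: "dedekind_complete TYPE('a)" and S: "S \<in> regular_ops"
begin

lemma pos_part_op_isLub:
  assumes "0 \<le> x" shows "isLub UNIV (S ` {0..x}) (pos_part_op S x)"
proof -
  obtain S1 S2 where S1: "pos_op S1" and S2: "pos_op S2" and S_eq: "S = (\<lambda>x. S1 x - S2 x)"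
    using S by (rule regular_opsE)
  have "S u \<le> S1 x" if "u \<in> {0..x}" for u
  proof -
    have "S u \<le> S1 u" using that pos_op_nonneg[OF S2, of u] by (simp add: S_eq)
    also have "\<dots> \<le> S1 x" using that pos_op_mono[OF S1, of u x] by simp
    finally show ?thesis .
  qed
  then have "bdd_above (S ` {0..x})" by (intro bdd_aboveI[of _ "S1 x"]) auto
  with assms have "\<exists>s. isLub UNIV (S ` {0..x}) s" by (intro dedekind_complete_isLub[OF dc]) auto
  then show ?thesis unfolding pos_part_op_def by (rule someI_ex)
qed

lemma pos_part_op_upper: "0 \<le> u \<Longrightarrow> u \<le> x \<Longrightarrow> S u \<le> pos_part_op S x"
  by (rule isLubD2[OF pos_part_op_isLub]) auto

lemma pos_part_op_least:
  "0 \<le> x \<Longrightarrow> (\<And>u. 0 \<le> u \<Longrightarrow> u \<le> x \<Longrightarrow> S u \<le> b) \<Longrightarrow> pos_part_op S x \<le> b"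
  by (rule isLub_le_isUb[OF pos_part_op_isLub]) (auto intro!: isUbI setleI)

lemma pos_part_op_add:
  assumes x: "0 \<le> x" and y: "0 \<le> y"
  shows "pos_part_op S (x + y) = pos_part_op S x + pos_part_op S y"
proof (rule antisym)
  have lin: "linear S" by (rule bounded_linear.linear[OF regular_ops_bounded_linear[OF S]])
  show "pos_part_op S (x + y) \<le> pos_part_op S x + pos_part_op S y"
  proof (rule pos_part_op_least)
    fix w assume w: "0 \<le> w" "w \<le> x + y"
    txt \<open>Riesz decomposition: \<open>w = inf w x + (w - inf w x)\<close> with \<open>w - inf w x \<le> y\<close>.\<close>
    have "S w = S (inf w x) + S (w - inf w x)" using linear_add[OF lin] by (metis add.commute diff_add_cancel)
    also have "\<dots> \<le> pos_part_op S x + pos_part_op S y"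
      using w x y diff_inf_le[OF w(2) y] diff_inf_nonneg by (intro add_mono pos_part_op_upper) auto
    finally show "S w \<le> pos_part_op S x + pos_part_op S y" .
  qed (use x y in simp)
  have "pos_part_op S x \<le> pos_part_op S (x + y) - S v" if v: "0 \<le> v" "v \<le> y" for v
  proof (rule pos_part_op_least[OF x])
    fix u assume u: "0 \<le> u" "u \<le> x"
    have "S u + S v = S (u + v)" using linear_add[OF lin] by simp
    also have "\<dots> \<le> pos_part_op S (x + y)" using u v by (intro pos_part_op_upper) (auto intro: add_mono)
    finally show "S u \<le> pos_part_op S (x + y) - S v" by (simp add: algebra_simps)
  qed
  then have "pos_part_op S y \<le> pos_part_op S (x + y) - pos_part_op S x"
    by (intro pos_part_op_least[OF y]) (simp add: algebra_simps)
  then show "pos_part_op S x + pos_part_op S y \<le> pos_part_op S (x + y)" by (simp add: algebra_simps)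
qed

lemma pos_part_op_scaleR:
  assumes x: "0 \<le> x" and t: "0 \<le> t"
  shows "pos_part_op S (t *\<^sub>R x) = t *\<^sub>R pos_part_op S x"
proof -
  have lin: "linear S" by (rule bounded_linear.linear[OF regular_ops_bounded_linear[OF S]])
  have le: "pos_part_op S (r *\<^sub>R z) \<le> r *\<^sub>R pos_part_op S z" if "0 < r" "0 \<le> z" for r z
  proof (rule pos_part_op_least)
    fix u assume u: "0 \<le> u" "u \<le> r *\<^sub>R z"
    have "inverse r *\<^sub>R u \<le> z"
      using scaleR_left_mono[OF u(2), of "inverse r"] \<open>0 < r\<close> by simp
    then have "S (inverse r *\<^sub>R u) \<le> pos_part_op S z"
      using u \<open>0 < r\<close> by (intro pos_part_op_upper) (simp_all add: scaleR_nonneg_nonneg)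
    then have "r *\<^sub>R S (inverse r *\<^sub>R u) \<le> r *\<^sub>R pos_part_op S z"
      using \<open>0 < r\<close> by (intro scaleR_left_mono) simp_all
    then show "S u \<le> r *\<^sub>R pos_part_op S z" using \<open>0 < r\<close> by (simp add: linear_scale[OF lin])
  qed (use that in \<open>simp add: scaleR_nonneg_nonneg\<close>)
  show ?thesis
  proof (cases "t = 0")
    case True
    have "pos_part_op S 0 = 0"
      by (intro antisym pos_part_op_least order_trans[OF _ pos_part_op_upper])
        (auto simp: linear_0[OF lin] dest: antisym)
    with True show ?thesis by simp
  next
    case False
    with t have t: "0 < t" by simp
    have "pos_part_op S x \<le> inverse t *\<^sub>R pos_part_op S (t *\<^sub>R x)"
      using le[of "inverse t" "t *\<^sub>R x"] t x by (simp add: scaleR_nonneg_nonneg)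
    then have "t *\<^sub>R pos_part_op S x \<le> pos_part_op S (t *\<^sub>R x)"
      using scaleR_left_mono[of _ _ t] t by fastforce
    with le[OF t x] show ?thesis by simp
  qed
qed

lemma pos_part_op_ge: "0 \<le> x \<Longrightarrow> S x \<le> pos_part_op S x"
  by (rule pos_part_op_upper) simp_all

lemma pos_part_op_nonneg: "0 \<le> x \<Longrightarrow> 0 \<le> pos_part_op S x"
  using pos_part_op_upper[of 0 x] linear_simps(3)[OF regular_ops_bounded_linear[OF S]] by simp

lemma pos_part_op_extension:
  obtains Q where "bounded_linear Q" "\<And>x. 0 \<le> x \<Longrightarrow> Q x = pos_part_op S x"
proof
  obtain S1 S2 where S1: "pos_op S1" and S2: "pos_op S2" and S_eq: "S = (\<lambda>x. S1 x - S2 x)"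
    using S by (rule regular_opsE)
  let ?P = "pos_part_op S"
  define Q where "Q x = ?P (pprt x) - ?P (pprt (- x))" for x
  have lin: "linear Q"
    unfolding Q_def[abs_def] by (intro linear_extension_from_cone pos_part_op_add pos_part_op_scaleR)
  show "Q x = ?P x" if "0 \<le> x" for x
    using that pos_part_op_scaleR[of 0 0] by (simp add: Q_def)
  have P_le: "?P x \<le> S1 x" if "0 \<le> x" for x
  proof (rule pos_part_op_least[OF that])
    fix u assume u: "0 \<le> u" "u \<le> x"
    have "S u \<le> S1 u" using u pos_op_nonneg[OF S2, of u] by (simp add: S_eq)
    also have "\<dots> \<le> S1 x" using u pos_op_mono[OF S1] by simp
    finally show "S u \<le> S1 x" .
  qed
  obtain K where K: "\<And>x. norm (S1 x) \<le> norm x * K"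
    using bounded_linear.bounded[OF pos_op_bounded_linear[OF S1]] by blast
  show "bounded_linear Q"
  proof (rule bounded_linear_intro[OF linear_add[OF lin] linear_scale[OF lin]])
    fix x
    have "labs (Q x) \<le> labs (?P (pprt x)) + labs (- ?P (pprt (- x)))"
      unfolding Q_def using labs_triangle by (metis diff_conv_add_uminus)
    also have "\<dots> = ?P (pprt x) + ?P (pprt (- x))"
      by (simp add: labs_minus labs_of_nonneg pos_part_op_nonneg)
    also have "\<dots> \<le> S1 (pprt x) + S1 (pprt (- x))" by (intro add_mono P_le) simp_all
    also have "\<dots> = S1 (labs x)"
      using linear_simps(1)[OF pos_op_bounded_linear[OF S1]] by (simp add: labs_eq_pprt[of x])
    also have "\<dots> = labs (S1 (labs x))"
      using pos_op_nonneg[OF S1 labs_nonneg] by (simp add: labs_of_nonneg)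
    finally have "norm (Q x) \<le> norm (S1 (labs x))" by (rule norm_le_if_labs_le)
    also have "\<dots> \<le> norm x * K" using K[of "labs x"] by (simp add: norm_labs)
    finally show "norm (Q x) \<le> norm x * K" .
  qed
qed

end

context
  assumes dc: "dedekind_complete TYPE('a::banach_lattice)"
begin

lemma modulus_exists:
  fixes S :: "'a \<Rightarrow> 'a"
  assumes S: "S \<in> regular_ops"
  shows "\<exists>M. M \<in> regular_ops \<and> op_le S M \<and> op_le (\<lambda>x. - S x) M \<and>
    (\<forall>N\<in>regular_ops. op_le S N \<and> op_le (\<lambda>x. - S x) N \<longrightarrow> op_le M N)"
proof -
  obtain S1 S2 where S1: "pos_op S1" and S2: "pos_op S2" and S_eq: "S = (\<lambda>x. S1 x - S2 x)"
    using S by (rule regular_opsE)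
  have S_bl: "bounded_linear S" by (rule regular_ops_bounded_linear[OF S])
  obtain Q where Q_bl: "bounded_linear Q" and Q: "\<And>x. 0 \<le> x \<Longrightarrow> Q x = pos_part_op S x"
    using pos_part_op_extension[OF dc S] by blast
  define M where "M x = 2 *\<^sub>R Q x - S x" for x
  have M_bl: "bounded_linear M"
    unfolding M_def by (intro bounded_linear_sub S_bl bounded_linear_scaleR_right bounded_linear_compose[OF _ Q_bl])
  have "pos_op (\<lambda>x. 2 *\<^sub>R Q x + S2 x)"
    unfolding pos_op_def using Q_bl pos_op_bounded_linear[OF S2] Q pos_part_op_nonneg[OF dc S]
      pos_op_nonneg[OF S2]
    by (auto simp: scaleR_nonneg_nonneg
        intro!: bounded_linear_add bounded_linear_compose[OF bounded_linear_scaleR_right])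
  moreover have "M = (\<lambda>x. (2 *\<^sub>R Q x + S2 x) - S1 x)" by (auto simp: M_def S_eq)
  ultimately have "M \<in> regular_ops" using S1 by (metis regular_opsI)
  moreover have "op_le S M"
  proof (rule op_leI[OF S_bl M_bl])
    fix x :: 'a assume "0 \<le> x"
    with pos_part_op_ge[OF dc S] have "S x + S x \<le> pos_part_op S x + pos_part_op S x"
      by (intro add_mono)
    then show "S x \<le> M x" using Q \<open>0 \<le> x\<close> by (simp add: M_def scaleR_2 algebra_simps)
  qed
  moreover have "op_le (\<lambda>x. - S x) M"
  proof (rule op_leI[OF bounded_linear_minus[OF S_bl] M_bl])
    fix x :: 'a assume "0 \<le> x"
    then show "- S x \<le> M x" using Q pos_part_op_nonneg[OF dc S] by (simp add: M_def scaleR_nonneg_nonneg)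
  qed
  moreover have "op_le M N" if N: "N \<in> regular_ops" "op_le S N" "op_le (\<lambda>x. - S x) N" for N
  proof (rule op_leI[OF M_bl regular_ops_bounded_linear[OF N(1)]])
    fix x :: 'a assume x: "0 \<le> x"
    txt \<open>For \<open>0 \<le> u \<le> x\<close>: \<open>2 S u = (S u - S (x - u)) + S x \<le> N u + N (x - u) + S x\<close>.\<close>
    have "pos_part_op S x \<le> (1/2) *\<^sub>R (N x + S x)"
    proof (rule pos_part_op_least[OF dc S x])
      fix u assume u: "0 \<le> u" "u \<le> x"
      have "S u + S u \<le> N u + S u" using op_leD[OF N(2) u(1)] by (rule add_right_mono)
      also have "\<dots> \<le> N x + S x"
        using op_leD[OF N(3), of "x - u"] u(2) linear_simps(2)[OF S_bl]
          linear_simps(2)[OF regular_ops_bounded_linear[OF N(1)]]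
        by (simp add: algebra_simps)
      finally have "S u + S u \<le> N x + S x" .
      then have "(1/2) *\<^sub>R (S u + S u) \<le> (1/2) *\<^sub>R (N x + S x)" by (intro scaleR_left_mono) auto
      then show "S u \<le> (1/2) *\<^sub>R (N x + S x)" by (simp add: scaleR_2[symmetric])
    qed
    then have "2 *\<^sub>R pos_part_op S x \<le> N x + S x"
      using scaleR_left_mono[of _ _ 2] by fastforce
    then show "M x \<le> N x" using Q x by (simp add: M_def algebra_simps)
  qed
  ultimately show ?thesis by blast
qed

context
  fixes S :: "'a \<Rightarrow> 'a"
  assumes S: "S \<in> regular_ops"
begin

lemma op_abs_spec:
  "op_abs S \<in> regular_ops \<and> op_le S (op_abs S) \<and> op_le (\<lambda>x. - S x) (op_abs S) \<and>
    (\<forall>N\<in>regular_ops. op_le S N \<and> op_le (\<lambda>x. - S x) N \<longrightarrow> op_le (op_abs S) N)"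
proof -
  obtain M where M: "M \<in> regular_ops \<and> op_le S M \<and> op_le (\<lambda>x. - S x) M \<and>
      (\<forall>N\<in>regular_ops. op_le S N \<and> op_le (\<lambda>x. - S x) N \<longrightarrow> op_le M N)"
    using modulus_exists[OF S] by blast
  moreover have "M' = M" if "M' \<in> regular_ops \<and> op_le S M' \<and> op_le (\<lambda>x. - S x) M' \<and>
      (\<forall>N\<in>regular_ops. op_le S N \<and> op_le (\<lambda>x. - S x) N \<longrightarrow> op_le M' N)" for M'
    using that M op_le_antisym[of M' M] by blast
  ultimately have "op_abs S = M" unfolding op_abs_def by (rule the_equality)
  with M show ?thesis by simp
qed

lemma op_abs_regular: "op_abs S \<in> regular_ops"
  using op_abs_spec by blast

lemma op_le_op_abs: "op_le S (op_abs S)"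
  using op_abs_spec by blast

lemma op_le_minus_op_abs: "op_le (\<lambda>x. - S x) (op_abs S)"
  using op_abs_spec by blast

lemma op_abs_least: "N \<in> regular_ops \<Longrightarrow> op_le S N \<Longrightarrow> op_le (\<lambda>x. - S x) N \<Longrightarrow> op_le (op_abs S) N"
  using op_abs_spec by blast

lemma labs_le_op_abs: "0 \<le> y \<Longrightarrow> labs (S y) \<le> op_abs S y"
  by (intro labs_leI op_leD[OF op_le_op_abs] op_leD[OF op_le_minus_op_abs])

lemma op_abs_nonneg: "0 \<le> y \<Longrightarrow> 0 \<le> op_abs S y"
  using labs_nonneg labs_le_op_abs by (rule order_trans)

lemma op_abs_le:
  assumes N: "N \<in> regular_ops" and le: "\<And>y. 0 \<le> y \<Longrightarrow> labs (S y) \<le> N y" and "0 \<le> y"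
  shows "op_abs S y \<le> N y"
proof -
  have "S x \<le> N x" "- S x \<le> N x" if "0 \<le> x" for x
    using labs_ge[of "S x"] le[OF that] by (auto intro: order_trans)
  then have "op_le S N" "op_le (\<lambda>x. - S x) N"
    using regular_ops_bounded_linear[OF S] regular_ops_bounded_linear[OF N]
    by (auto intro!: op_leI bounded_linear_minus)
  from op_leD[OF op_abs_least[OF N this] \<open>0 \<le> y\<close>] show ?thesis .
qed

end

lemma op_abs_le_add_op_abs_diff:
  fixes S T :: "'a \<Rightarrow> 'a"
  assumes S: "S \<in> regular_ops" and T: "T \<in> regular_ops" and "0 \<le> y"
  shows "op_abs S y \<le> op_abs T y + op_abs (\<lambda>x. T x - S x) y"
proof (rule op_abs_le[OF S regular_ops_add[OF op_abs_regular[OF T] op_abs_regular] _ \<open>0 \<le> y\<close>])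
  show "(\<lambda>x. T x - S x) \<in> regular_ops" using T S by (rule regular_ops_diff)
  fix z :: 'a assume z: "0 \<le> z"
  have "labs (S z) \<le> labs (T z) + labs (- (T z - S z))"
    using labs_triangle[of "T z" "- (T z - S z)"] by simp
  also have "\<dots> = labs (T z) + labs (T z - S z)" by (simp only: labs_minus)
  also have "\<dots> \<le> op_abs T z + op_abs (\<lambda>x. T x - S x) z"
    using labs_le_op_abs[OF T z] labs_le_op_abs[OF regular_ops_diff[OF T S] z] by (intro add_mono) simp_all
  finally show "labs (S z) \<le> op_abs T z + op_abs (\<lambda>x. T x - S x) z" .
qed

section \<open>r-l-Lwc operators on Dedekind complete lattices\<close>

lemma rlLwc_ops_iff_op_abs:
  fixes S :: "'a \<Rightarrow> 'a"
  shows "S \<in> rlLwc_ops \<longleftrightarrow> S \<in> regular_ops \<and> (\<forall>y\<ge>0. Lwc_elem (op_abs S y))"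
proof (intro iffI conjI allI impI; (elim conjE)?)
  assume "S \<in> rlLwc_ops"
  then show S: "S \<in> regular_ops" using rlLwc_ops_subset_regular_ops by blast
  obtain T1 T2 where T1: "pos_op T1" "limitedly_Lwc T1" and T2: "pos_op T2" "limitedly_Lwc T2"
    and S_eq: "S = (\<lambda>x. T1 x - T2 x)"
    using \<open>S \<in> rlLwc_ops\<close> by (rule rlLwc_opsE)
  fix y :: 'a assume y: "0 \<le> y"
  have "(\<lambda>x. T1 x + T2 x) \<in> regular_ops"
    using regular_opsI[OF pos_op_add[OF T1(1) T2(1)] pos_op_zero] by simp
  then have "op_abs S y \<le> T1 y + T2 y"
  proof (rule op_abs_le[OF S _ _ y])
    fix z :: 'a assume "0 \<le> z"
    have "labs (S z) \<le> labs (T1 z) + labs (- T2 z)"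
      using labs_triangle[of "T1 z" "- T2 z"] by (simp add: S_eq)
    then show "labs (S z) \<le> T1 z + T2 z"
      using pos_op_nonneg[OF T1(1) \<open>0 \<le> z\<close>] pos_op_nonneg[OF T2(1) \<open>0 \<le> z\<close>]
      by (simp add: labs_minus labs_of_nonneg)
  qed
  then have "labs (op_abs S y) \<le> labs (T1 y + T2 y)"
    using op_abs_nonneg[OF S y] pos_op_nonneg[OF T1(1) y] pos_op_nonneg[OF T2(1) y]
    by (simp add: labs_of_nonneg)
  moreover have "Lwc_elem (T1 y + T2 y)"
    using T1(2) T2(2) unfolding limitedly_Lwc_iff by (blast intro: Lwc_elem_add)
  ultimately show "Lwc_elem (op_abs S y)" by (rule Lwc_elem_solid[rotated])
next
  assume S: "S \<in> regular_ops" and Lwc: "\<forall>y\<ge>0. Lwc_elem (op_abs S y)"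
  have abs_bl: "bounded_linear (op_abs S)" by (rule regular_ops_bounded_linear[OF op_abs_regular[OF S]])
  have S_bl: "bounded_linear S" by (rule regular_ops_bounded_linear[OF S])
  have Lwc_S: "Lwc_elem (S y)" if "0 \<le> y" for y
  proof (rule Lwc_elem_solid)
    show "Lwc_elem (op_abs S y)" using Lwc that by blast
    show "labs (S y) \<le> labs (op_abs S y)"
      using labs_le_op_abs[OF S that] op_abs_nonneg[OF S that] by (simp add: labs_of_nonneg)
  qed
  have "pos_op (op_abs S)" using abs_bl op_abs_nonneg[OF S] by (simp add: pos_op_def)
  moreover have "S x \<le> op_abs S x" if "0 \<le> x" for x
    using labs_ge(1)[of "S x"] labs_le_op_abs[OF S that] by (rule order_trans)
  then have "pos_op (\<lambda>x. op_abs S x - S x)"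
    using abs_bl S_bl by (simp add: pos_op_def bounded_linear_sub)
  moreover have "limitedly_Lwc (op_abs S)"
    using abs_bl Lwc by (simp add: limitedly_Lwc_of_nonneg)
  moreover have "limitedly_Lwc (\<lambda>x. op_abs S x - S x)"
    using abs_bl S_bl Lwc Lwc_S by (simp add: limitedly_Lwc_of_nonneg bounded_linear_sub Lwc_elem_diff)
  ultimately have "(\<lambda>x. op_abs S x - (op_abs S x - S x)) \<in> rlLwc_ops" by (intro rlLwc_opsI)
  then show "S \<in> rlLwc_ops" by simp
qed

lemma is_order_ideal_rlLwc_ops: "is_order_ideal (rlLwc_ops :: ('a \<Rightarrow> 'a) set)"
  unfolding is_order_ideal_def
proof (intro conjI ballI allI impI)
  fix S T :: "'a \<Rightarrow> 'a"
  assume S: "S \<in> regular_ops" and T: "T \<in> rlLwc_ops" and le: "op_le (op_abs S) (op_abs T)"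
  have "Lwc_elem (op_abs S y)" if "0 \<le> y" for y
  proof (rule Lwc_elem_solid)
    show "Lwc_elem (op_abs T y)" using T that rlLwc_ops_iff_op_abs by blast
    have "T \<in> regular_ops" using T rlLwc_ops_subset_regular_ops by blast
    then show "labs (op_abs S y) \<le> labs (op_abs T y)"
      using op_leD[OF le that] op_abs_nonneg[OF S that] op_abs_nonneg[OF _ that]
      by (simp add: labs_of_nonneg)
  qed
  with S show "S \<in> rlLwc_ops" by (simp add: rlLwc_ops_iff_op_abs)
qed (simp_all add: rlLwc_ops_subset_regular_ops rlLwc_ops_zero rlLwc_ops_add rlLwc_ops_scaleR)

lemma reg_closed_rlLwc_ops: "reg_closed (rlLwc_ops :: ('a \<Rightarrow> 'a) set)"
  unfolding reg_closed_def
proof (intro allI impI, elim conjE)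
  fix T :: "nat \<Rightarrow> 'a \<Rightarrow> 'a" and S :: "'a \<Rightarrow> 'a"
  assume T: "\<forall>n. T n \<in> rlLwc_ops" and S: "S \<in> regular_ops"
    and lim: "(\<lambda>n. reg_norm (\<lambda>x. T n x - S x)) \<longlonglongrightarrow> 0"
  have T_reg: "T n \<in> regular_ops" for n using T rlLwc_ops_subset_regular_ops by blast
  define D where "D n = op_abs (\<lambda>x. T n x - S x)" for n
  have D_reg: "(\<lambda>x. T n x - S x) \<in> regular_ops" for n by (rule regular_ops_diff[OF T_reg S])
  have D_bl: "bounded_linear (D n)" for n
    unfolding D_def by (rule regular_ops_bounded_linear[OF op_abs_regular[OF D_reg]])
  have "Lwc_elem (op_abs S y)" if y: "0 \<le> y" for y
  proof (rule Lwc_elem_limit)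
    let ?u = "op_abs S y"
    show "Lwc_elem (inf ?u (op_abs (T n) y))" for n
    proof (rule Lwc_elem_solid)
      show "Lwc_elem (op_abs (T n) y)" using T y rlLwc_ops_iff_op_abs by blast
      show "labs (inf ?u (op_abs (T n) y)) \<le> labs (op_abs (T n) y)"
        using op_abs_nonneg[OF S y] op_abs_nonneg[OF T_reg y] by (simp add: labs_of_nonneg)
    qed
    have bound: "norm (inf ?u (op_abs (T n) y) - ?u) \<le> reg_norm (\<lambda>x. T n x - S x) * norm y" for n
    proof -
      have "?u - inf ?u (op_abs (T n) y) \<le> D n y"
        using op_abs_le_add_op_abs_diff[OF S T_reg y] op_abs_nonneg[OF D_reg y]
        unfolding D_def by (rule diff_inf_le)
      then have "norm (?u - inf ?u (op_abs (T n) y)) \<le> norm (D n y)"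
        by (rule norm_mono_nonneg[OF diff_inf_nonneg])
      also have "\<dots> \<le> reg_norm (\<lambda>x. T n x - S x) * norm y"
        using onorm[OF D_bl] by (simp add: reg_norm_def D_def)
      finally show ?thesis by (simp add: norm_minus_commute)
    qed
    have "(\<lambda>n. reg_norm (\<lambda>x. T n x - S x) * norm y) \<longlonglongrightarrow> 0"
      using lim by (rule tendsto_mult_left_zero)
    from Lim_null_comparison[OF always_eventually[OF allI[OF bound]] this]
    have "(\<lambda>n. inf ?u (op_abs (T n) y) - ?u) \<longlonglongrightarrow> 0" .
    then show "(\<lambda>n. inf ?u (op_abs (T n) y)) \<longlonglongrightarrow> ?u" by (simp add: LIM_zero_iff)
  qed
  with S show "S \<in> rlLwc_ops" by (simp add: rlLwc_ops_iff_op_abs)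
qed

end

theorem theorem3p7:
  shows "(is_subalgebra (rlLwc_ops :: ('a::banach_lattice \<Rightarrow> 'a) set) regular_ops \<and>
          (rlLwc_ops = (regular_ops :: ('a \<Rightarrow> 'a) set) \<longleftrightarrow> limitedly_Lwc (id :: 'a \<Rightarrow> 'a)))
       \<and> (dedekind_complete TYPE('a) \<longrightarrow>
          is_order_ideal (rlLwc_ops :: ('a \<Rightarrow> 'a) set) \<and> reg_closed (rlLwc_ops :: ('a \<Rightarrow> 'a) set))"
  using is_subalgebra_rlLwc_ops rlLwc_ops_eq_regular_ops_iff is_order_ideal_rlLwc_ops
    reg_closed_rlLwc_ops by blast

end
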